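(* Let $G$ be a crown-free linear $3$-graph on $n$ vertices, and let $s$ be the number of vertices of $G$ of degree at least $6$. Then the number of edges of $G$ satisfies $$|E(G)| \leq \frac{3(n-s)}{2}.$$
   Context: A linear $3$-graph $G=(V,E)$ consists of a finite vertex set $V$ and a collection $E$ of $3$-element subsets of $V$ (edges) such that any two distinct edges share at most one vertex. The degree $d(v)$ of a vertex $v$ is the number of edges containing $v$. The crown $C_{13}$ is the linear $3$-graph on $9$ vertices $\{a,b,c,d,e,f,g,h,i\}$ with edges $\{a,b,c\},\{a,d,e\},\{b,f,g\},\{c,h,i\}$. A linear $3$-graph is crown-free if it contains no copy of $C_{13}$, i.e. no four of its edges together with an injective assignment of the nine vertices form the crown. *)

theory Defs
  imports Complex_Main
begin

definition linear_3graph :: "'a set \<Rightarrow> 'a set set \<Rightarrow> bool" where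
  "linear_3graph V E \<longleftrightarrow> finite V \<and>
     (\<forall>e\<in>E. e \<subseteq> V \<and> card e = 3) \<and>
     (\<forall>e\<in>E. \<forall>f\<in>E. e \<noteq> f \<longrightarrow> card (e \<inter> f) \<le> 1)"

definition degree :: "'a set set \<Rightarrow> 'a \<Rightarrow> nat" where
  "degree E v = card {e \<in> E. v \<in> e}"

definition has_crown :: "'a set \<Rightarrow> 'a set set \<Rightarrow> bool" where
  "has_crown V E \<longleftrightarrow> (\<exists>a b c d e f g h i.
     distinct [a, b, c, d, e, f, g, h, i] \<and>
     {a, b, c} \<in> E \<and> {a, d, e} \<in> E \<and> {b, f, g} \<in> E \<and> {c, h, i} \<in> E)"

definition crown_free :: "'a set \<Rightarrow> 'a set set \<Rightarrow> bool" where
  "crown_free V E \<longleftrightarrow> \<not> has_crown V E"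

end

theory Submission
  imports Defs
begin

text \<open>Let every vertex of degree d < 6 send weight 1/d to each of its edges; the total weight
  is then at most n - s. Crown-freeness forbids an edge whose degrees dominate (6, 4, 2), and
  with this a short case analysis shows that every edge receives weight at least 2/3, except a
  light edge abc with degrees (4 or 5, 5, 5). Around a light edge crown-freeness forces a rigid
  structure: the eight further neighbours of b are those of c and contain those of a, the
  partner maps across b and c commute, and no edge leaves the eleven vertices abc together with
  the neighbours of b. This component has at most 15 <= 3 * 11 / 2 edges and no vertex of degree
  6 or more, so it can be deleted, and induction on the number of edges finishes the proof.\<close>

lemma card_3_distinct: "card {x, y, z} = 3 \<Longrightarrow> x \<noteq> y \<and> x \<noteq> z \<and> y \<noteq> z"
  by (auto simp: card_insert_if split: if_splits)

text \<open>The third vertex of the edge through z and u; unspecified if there is no such edge.\<close>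
definition third :: "'a set set \<Rightarrow> 'a \<Rightarrow> 'a \<Rightarrow> 'a" where
  "third E z u = (THE v. {z, u, v} \<in> E)"

locale triple_system =
  fixes V :: "'a set" and E :: "'a set set"
  assumes linear: "linear_3graph V E"
begin

lemma finite_vertices: "finite V"
  using linear unfolding linear_3graph_def by blast

lemma edge_subset: "f \<in> E \<Longrightarrow> f \<subseteq> V"
  using linear unfolding linear_3graph_def by blast

lemma finite_edges: "finite E"
  using edge_subset finite_vertices by (meson PowI finite_Pow_iff finite_subset subsetI)

lemma card_edge: "f \<in> E \<Longrightarrow> card f = 3"
  using linear unfolding linear_3graph_def by blast

lemma finite_edge: "f \<in> E \<Longrightarrow> finite f"
  using card_edge by (intro card_ge_0_finite) simp

lemma edge_eqI:
  assumes "e \<in> E" "f \<in> E" "x \<in> e" "y \<in> e" "x \<in> f" "y \<in> f" "x \<noteq> y"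
  shows "e = f"
proof (rule ccontr)
  assume "e \<noteq> f"
  hence "card (e \<inter> f) \<le> 1" using linear assms(1,2) unfolding linear_3graph_def by blast
  moreover have "card {x, y} \<le> card (e \<inter> f)"
    using assms finite_edge by (intro card_mono) auto
  ultimately show False using assms(7) by simp
qed

lemma edge_distinct: "{x, y, z} \<in> E \<Longrightarrow> x \<noteq> y \<and> x \<noteq> z \<and> y \<noteq> z"
  by (rule card_3_distinct[OF card_edge])

lemma edge_through:
  assumes "f \<in> E" "z \<in> f"
  obtains x y where "f = {z, x, y}"
proof -
  have "card (f - {z}) = 2" using card_edge[OF assms(1)] assms(2) finite_edge[OF assms(1)] by simp
  then obtain x y where "f - {z} = {x, y}" by (meson card_2_iff)
  then show ?thesis using that assms(2) by blast
qed

lemma card_edges_through_two: "x \<noteq> y \<Longrightarrow> card {f \<in> E. x \<in> f \<and> y \<in> f} \<le> 1"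
  using finite_edges edge_eqI[of _ _ x y] by (auto simp: card_le_Suc0_iff_eq)

text \<open>Each vertex of T shares at most one edge with z.\<close>
lemma edge_avoiding:
  assumes "finite F" "finite T" "z \<notin> T" "card F + card T < degree E z"
  obtains m m' where "{z, m, m'} \<in> E" "{z, m, m'} \<notin> F" "m \<notin> T" "m' \<notin> T"
proof -
  let ?through = "\<lambda>t. {f \<in> E. z \<in> f \<and> t \<in> f}"
  have "\<exists>f\<in>E. z \<in> f \<and> f \<notin> F \<and> f \<inter> T = {}"
  proof (rule ccontr)
    assume "\<not> ?thesis"
    hence "{f \<in> E. z \<in> f} \<subseteq> F \<union> (\<Union>t\<in>T. ?through t)" by blast
    hence "degree E z \<le> card (F \<union> (\<Union>t\<in>T. ?through t))"
      unfolding degree_def using assms(1,2) finite_edges by (intro card_mono) auto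
    also have "\<dots> \<le> card F + card (\<Union>t\<in>T. ?through t)" by (rule card_Un_le)
    also have "\<dots> \<le> card F + (\<Sum>t\<in>T. card (?through t))"
      using card_UN_le[OF assms(2)] by simp
    also have "(\<Sum>t\<in>T. card (?through t)) \<le> (\<Sum>t\<in>T. 1)"
      by (intro sum_mono card_edges_through_two) (use assms(3) in blast)
    finally show False using assms(4) by simp
  qed
  then obtain f where f: "f \<in> E" "z \<in> f" "f \<notin> F" "f \<inter> T = {}" by blast
  then obtain m m' where "f = {z, m, m'}" using edge_through by metis
  with f show ?thesis using that by blast
qed

lemma other_edge_outside:
  assumes "e \<in> E" "{z, p, q} \<in> E" "z \<in> e" "{z, p, q} \<noteq> e"
  shows "p \<notin> e \<and> q \<notin> e \<and> p \<noteq> q"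
  using edge_distinct[OF assms(2)] edge_eqI[OF assms(1,2), of z] assms(3,4) by blast

lemma degree_pos: "f \<in> E \<Longrightarrow> v \<in> f \<Longrightarrow> 1 \<le> degree E v"
  unfolding degree_def using finite_edges by (simp add: Suc_le_eq card_gt_0_iff) blast

lemma third_eqI:
  assumes "{z, u, v} \<in> E"
  shows "third E z u = v"
  unfolding third_def
proof (rule the_equality)
  fix v' assume v': "{z, u, v'} \<in> E"
  have "{z, u, v'} = {z, u, v}" using edge_eqI[OF v' assms, of z u] edge_distinct[OF assms] by simp
  then have "v' \<in> {z, u, v}" by blast
  then show "v' = v" using edge_distinct[OF v'] by blast
qed (rule assms)

lemma card_link:
  assumes "e \<in> E" "z \<in> e"
  shows "card {u. (\<exists>v. {z, u, v} \<in> E) \<and> u \<notin> e} = 2 * (degree E z - 1)"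
proof -
  define F where "F = {f \<in> E. z \<in> f} - {e}"
  have link: "{u. (\<exists>v. {z, u, v} \<in> E) \<and> u \<notin> e} = (\<Union>f\<in>F. f - {z})"
  proof (intro equalityI subsetI)
    fix u assume "u \<in> {u. (\<exists>v. {z, u, v} \<in> E) \<and> u \<notin> e}"
    then obtain v where "{z, u, v} \<in> E" "u \<notin> e" by blast
    then show "u \<in> (\<Union>f\<in>F. f - {z})" unfolding F_def using assms(2) by blast
  next
    fix u assume "u \<in> (\<Union>f\<in>F. f - {z})"
    then obtain f where f: "f \<in> E" "z \<in> f" "f \<noteq> e" "u \<in> f" "u \<noteq> z" unfolding F_def by blast
    then obtain x y where "f = {z, x, y}" using edge_through[OF f(1,2)] by blast
    then have "\<exists>v. f = {z, u, v}" using f(4,5) by (metis insert_commute insertE singletonD)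
    moreover have "u \<notin> e" using edge_eqI[of e f z u] assms f by blast
    ultimately show "u \<in> {u. (\<exists>v. {z, u, v} \<in> E) \<and> u \<notin> e}" using f(1) by blast
  qed
  have disjoint: "(f - {z}) \<inter> (g - {z}) = {}" if "f \<in> F" "g \<in> F" "f \<noteq> g" for f g
    using that edge_eqI[of f g z] unfolding F_def by blast
  have "card (\<Union>f\<in>F. f - {z}) = (\<Sum>f\<in>F. card (f - {z}))"
    using finite_edges finite_edge disjoint unfolding F_def by (intro card_UN_disjoint) auto
  also have "\<dots> = (\<Sum>f\<in>F. 2)"
    using card_edge finite_edge unfolding F_def by (intro sum.cong) auto
  also have "\<dots> = 2 * card F" by simp
  also have "card F = degree E z - 1"
    using assms finite_edges unfolding F_def degree_def by (subst card_Diff_singleton) auto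
  finally show ?thesis using link by simp
qed

lemma sum_edge_weights:
  fixes w :: "'a \<Rightarrow> real"
  shows "(\<Sum>e\<in>E. \<Sum>v\<in>e. w v) = (\<Sum>v\<in>V. real (degree E v) * w v)"
proof -
  have inner: "(\<Sum>v\<in>e. w v) = (\<Sum>v\<in>V. if v \<in> e then w v else 0)" if "e \<in> E" for e
    using finite_vertices edge_subset[OF that] by (simp add: sum.inter_restrict[symmetric] Int_absorb1)
  have "(\<Sum>e\<in>E. \<Sum>v\<in>e. w v) = (\<Sum>e\<in>E. \<Sum>v\<in>V. if v \<in> e then w v else 0)"
    using inner by (rule sum.cong[OF refl])
  also have "\<dots> = (\<Sum>v\<in>V. \<Sum>e\<in>E. if v \<in> e then w v else 0)"
    by (rule sum.swap)
  also have "\<dots> = (\<Sum>v\<in>V. real (degree E v) * w v)"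
    using finite_edges by (simp add: sum.inter_filter[symmetric] degree_def)
  finally show ?thesis .
qed

end

locale crown_free_triple_system = triple_system +
  assumes crown_free: "crown_free V E"
begin

lemma no_crown:
  assumes "distinct [a, b, c, d, e, f, g, h, i]"
    and "{a, b, c} \<in> E" "{a, d, e} \<in> E" "{b, f, g} \<in> E" "{c, h, i} \<in> E"
  shows False
  using crown_free assms unfolding crown_free_def has_crown_def by blast

text \<open>Otherwise legs at z1 and z3 avoiding the leg {z2, u, x} would complete a crown
  with body {z1, z2, z3}.\<close>
lemma neighbour_transfer:
  assumes edge: "{z1, z2, z3} \<in> E"
    and deg: "4 \<le> degree E z1" "5 \<le> degree E z3"
    and leg: "{z2, u, x} \<in> E" "u \<notin> {z1, z2, z3}"
  shows "\<exists>y. {z3, u, y} \<in> E"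
proof (rule ccontr)
  assume no_edge: "\<nexists>y. {z3, u, y} \<in> E"
  have "{z2, u, x} \<noteq> {z1, z2, z3}" using leg(2) by blast
  then have x: "x \<notin> {z1, z2, z3}" "u \<noteq> x" using other_edge_outside[OF edge leg(1)] by auto
  obtain w w' where w: "{z1, w, w'} \<in> E" "{z1, w, w'} \<notin> {{z1, z2, z3}}" "w \<notin> {u, x}" "w' \<notin> {u, x}"
  proof (rule edge_avoiding[of "{{z1, z2, z3}}" "{u, x}" z1])
    show "card {{z1, z2, z3}} + card {u, x} < degree E z1" using deg by (simp add: card_insert_if)
  qed (use leg(2) x in auto)
  have w_out: "w \<notin> {z1, z2, z3}" "w' \<notin> {z1, z2, z3}" "w \<noteq> w'"
    using other_edge_outside[OF edge w(1)] w(2) by auto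
  obtain h h' where h: "{z3, h, h'} \<in> E" "{z3, h, h'} \<notin> {{z1, z2, z3}}" "h \<notin> {x, w, w'}" "h' \<notin> {x, w, w'}"
  proof (rule edge_avoiding[of "{{z1, z2, z3}}" "{x, w, w'}" z3])
    show "card {{z1, z2, z3}} + card {x, w, w'} < degree E z3" using deg by (simp add: card_insert_if)
  qed (use x w_out in auto)
  have h_out: "h \<notin> {z1, z2, z3}" "h' \<notin> {z1, z2, z3}" "h \<noteq> h'"
    using other_edge_outside[OF edge h(1)] h(2) by auto
  have "h \<noteq> u" "h' \<noteq> u" using no_edge h(1) by (metis insert_commute)+
  then have "distinct [z1, z2, z3, w, w', u, x, h, h']"
    using edge_distinct[OF edge] w_out x leg(2) h_out w(3,4) h(3,4) by auto
  then show False using no_crown edge w(1) leg(1) h(1) by blast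
qed

text \<open>Otherwise {z2, p, x} is the body of a crown with legs {p, z1, q}, {x, z3, r} and a third
  leg through z2.\<close>
lemma partner_cycle_closes:
  assumes edge: "{z1, z2, z3} \<in> E" and deg: "5 \<le> degree E z2"
    and pq: "{z1, p, q} \<in> E" and px: "{z2, p, x} \<in> E" and xr: "{z3, x, r} \<in> E"
    and p: "p \<notin> {z1, z2, z3}"
  shows "r = q"
proof (rule ccontr)
  assume rq: "r \<noteq> q"
  have dz: "z1 \<noteq> z2" "z1 \<noteq> z3" "z2 \<noteq> z3" using edge_distinct[OF edge] by auto
  have "{z1, p, q} \<noteq> {z1, z2, z3}" "{z2, p, x} \<noteq> {z1, z2, z3}" using p by blast+
  then have q: "q \<notin> {z1, z2, z3}" "p \<noteq> q" and x: "x \<notin> {z1, z2, z3}" "p \<noteq> x"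
    using other_edge_outside[OF edge pq] other_edge_outside[OF edge px] by auto
  have "{z3, x, r} \<noteq> {z1, z2, z3}" using x by blast
  then have r: "r \<notin> {z1, z2, z3}" "x \<noteq> r" using other_edge_outside[OF edge xr] by auto
  have "x \<noteq> q"
  proof
    assume "x = q"
    then have "{z1, p, q} = {z2, p, x}" using edge_eqI[OF pq px, of p q] q by simp
    then have "z1 \<in> {z2, p, x}" by blast
    then show False using dz p x by blast
  qed
  moreover have "r \<noteq> p"
  proof
    assume "r = p"
    then have "{z3, x, r} = {z2, p, x}" using edge_eqI[OF xr px, of x p] x by simp
    then have "z3 \<in> {z2, p, x}" by blast
    then show False using dz p x by blast
  qed
  moreover obtain m m' where m: "{z2, m, m'} \<in> E" "{z2, m, m'} \<notin> {{z1, z2, z3}, {z2, p, x}}"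
    "m \<notin> {q, r}" "m' \<notin> {q, r}"
  proof (rule edge_avoiding[of "{{z1, z2, z3}, {z2, p, x}}" "{q, r}" z2])
    show "card {{z1, z2, z3}, {z2, p, x}} + card {q, r} < degree E z2"
      using deg by (simp add: card_insert_if)
  qed (use q r in auto)
  moreover have "m \<notin> {z1, z2, z3}" "m' \<notin> {z1, z2, z3}" "m \<noteq> m'"
    using other_edge_outside[OF edge m(1)] m(2) by auto
  moreover have "m \<noteq> p" "m' \<noteq> p" "m \<noteq> x" "m' \<noteq> x"
    using edge_eqI[OF m(1) px, of z2] m(2) calculation by auto
  ultimately have "distinct [z2, p, x, m, m', z1, q, z3, r]"
    using dz p q x r rq by auto
  moreover have "{p, z1, q} \<in> E" "{x, z3, r} \<in> E" using pq xr by (simp_all add: insert_commute)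
  ultimately show False using no_crown px m(1) by blast
qed

lemma no_edge_with_degrees_6_4_2:
  assumes edge: "{a, b, c} \<in> E"
    and deg: "6 \<le> degree E a" "4 \<le> degree E b" "2 \<le> degree E c"
  shows False
proof -
  obtain h h' where h: "{c, h, h'} \<in> E" "{c, h, h'} \<notin> {{a, b, c}}"
    by (rule edge_avoiding[of "{{a, b, c}}" "{}" c]) (use deg in auto)
  have h_out: "h \<notin> {a, b, c}" "h' \<notin> {a, b, c}" "h \<noteq> h'"
    using other_edge_outside[OF edge h(1)] h(2) by auto
  obtain m m' where m: "{b, m, m'} \<in> E" "{b, m, m'} \<notin> {{a, b, c}}" "m \<notin> {h, h'}" "m' \<notin> {h, h'}"
  proof (rule edge_avoiding[of "{{a, b, c}}" "{h, h'}" b])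
    show "card {{a, b, c}} + card {h, h'} < degree E b" using deg by (simp add: card_insert_if)
  qed (use h_out in auto)
  have m_out: "m \<notin> {a, b, c}" "m' \<notin> {a, b, c}" "m \<noteq> m'"
    using other_edge_outside[OF edge m(1)] m(2) by auto
  obtain w w' where w: "{a, w, w'} \<in> E" "{a, w, w'} \<notin> {{a, b, c}}"
    "w \<notin> {h, h', m, m'}" "w' \<notin> {h, h', m, m'}"
  proof (rule edge_avoiding[of "{{a, b, c}}" "{h, h', m, m'}" a])
    show "card {{a, b, c}} + card {h, h', m, m'} < degree E a" using deg by (simp add: card_insert_if)
  qed (use h_out m_out in auto)
  have "w \<notin> {a, b, c}" "w' \<notin> {a, b, c}" "w \<noteq> w'"
    using other_edge_outside[OF edge w(1)] w(2) by auto
  then have "distinct [a, b, c, w, w', m, m', h, h']"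
    using edge_distinct[OF edge] h_out m_out m(3,4) w(3,4) by auto
  then show False using no_crown edge w(1) m(1) h(1) by blast
qed

end

definition weight :: "nat \<Rightarrow> real" where
  "weight d = (if d < 6 then 1 / real d else 0)"

definition orderings :: "'a \<Rightarrow> 'a \<Rightarrow> 'a \<Rightarrow> ('a \<times> 'a \<times> 'a) set" where
  "orderings x y z = {(x, y, z), (x, z, y), (y, x, z), (y, z, x), (z, x, y), (z, y, x)}"

text \<open>The edges on which the weighting fails: their weight is 1/4 + 2/5 or 3/5.\<close>
definition light_edge :: "'a set set \<Rightarrow> 'a \<Rightarrow> 'a \<Rightarrow> 'a \<Rightarrow> bool" where
  "light_edge E a b c \<longleftrightarrow>
     {a, b, c} \<in> E \<and> distinct [a, b, c] \<and> degree E a \<in> {4, 5} \<and> degree E b = 5 \<and> degree E c = 5"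

lemma weight_nonneg: "0 \<le> weight d"
  by (simp add: weight_def)

lemma weight_ge_third: "1 \<le> d \<Longrightarrow> d \<le> 3 \<Longrightarrow> 1 / 3 \<le> weight d"
  by (simp add: weight_def field_simps)

lemma weight_ge_fifth: "1 \<le> d \<Longrightarrow> d \<le> 5 \<Longrightarrow> 1 / 5 \<le> weight d"
  by (simp add: weight_def field_simps)

lemma weight_sum_ge:
  fixes d :: "'a \<Rightarrow> nat"
  assumes pos: "1 \<le> d x" "1 \<le> d y" "1 \<le> d z"
    and excluded: "\<And>p q r. (p, q, r) \<in> orderings x y z \<Longrightarrow>
      \<not> (6 \<le> d p \<and> 4 \<le> d q \<and> 2 \<le> d r) \<and> \<not> (d p \<in> {4, 5} \<and> d q = 5 \<and> d r = 5)"
  shows "2 / 3 \<le> weight (d x) + weight (d y) + weight (d z)"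
proof -
  note no_642 = excluded[THEN conjunct1, unfolded orderings_def]
  note no_light = excluded[THEN conjunct2, unfolded orderings_def]
  have nonneg: "0 \<le> weight (d x)" "0 \<le> weight (d y)" "0 \<le> weight (d z)"
    by (simp_all add: weight_nonneg)
  consider "d x = 1 \<or> d y = 1 \<or> d z = 1" | "6 \<le> d x \<or> 6 \<le> d y \<or> 6 \<le> d z" "2 \<le> d x" "2 \<le> d y" "2 \<le> d z"
    | "2 \<le> d x" "2 \<le> d y" "2 \<le> d z" "d x \<le> 5" "d y \<le> 5" "d z \<le> 5"
    using pos by linarith
  then show ?thesis
  proof cases
    case 1
    then show ?thesis using nonneg by (auto simp: weight_def)
  next
    case 2
    then have "d y \<le> 3 \<and> d z \<le> 3 \<or> d x \<le> 3 \<and> d z \<le> 3 \<or> d x \<le> 3 \<and> d y \<le> 3"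
      using no_642[of x y z] no_642[of x z y] no_642[of y x z] no_642[of y z x]
        no_642[of z x y] no_642[of z y x] by auto
    then show ?thesis
      using pos weight_ge_third[of "d x"] weight_ge_third[of "d y"] weight_ge_third[of "d z"] nonneg
      by auto
  next
    case 3
    then have fifth: "1 / 5 \<le> weight (d x)" "1 / 5 \<le> weight (d y)" "1 / 5 \<le> weight (d z)"
      using weight_ge_fifth by simp_all
    show ?thesis
    proof (cases "d x \<le> 3 \<or> d y \<le> 3 \<or> d z \<le> 3")
      case True
      then have "1 / 3 \<le> weight (d x) \<or> 1 / 3 \<le> weight (d y) \<or> 1 / 3 \<le> weight (d z)"
        using pos weight_ge_third by blast
      then show ?thesis using fifth by linarith
    next
      case False
      then have "d x \<in> {4, 5}" "d y \<in> {4, 5}" "d z \<in> {4, 5}" using 3 by auto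
      then have "d x = 4 \<and> d y = 4 \<or> d x = 4 \<and> d z = 4 \<or> d y = 4 \<and> d z = 4"
        using no_light[of x y z] no_light[of y x z] no_light[of z x y] by auto
      then have "1 / 2 \<le> weight (d x) + weight (d y) \<or> 1 / 2 \<le> weight (d x) + weight (d z)
          \<or> 1 / 2 \<le> weight (d y) + weight (d z)"
        by (auto simp: weight_def)
      then show ?thesis using fifth by linarith
    qed
  qed
qed

context crown_free_triple_system
begin

lemma edge_weight_ge:
  assumes no_light: "\<And>a b c. \<not> light_edge E a b c" and e: "e \<in> E"
  shows "2 / 3 \<le> (\<Sum>v\<in>e. weight (degree E v))"
proof -
  obtain x y z where xyz: "e = {x, y, z}" "x \<noteq> y" "y \<noteq> z" "x \<noteq> z"
    using card_edge[OF e] card_3_iff by metis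
  have excluded: "\<not> (6 \<le> degree E p \<and> 4 \<le> degree E q \<and> 2 \<le> degree E r) \<and>
      \<not> (degree E p \<in> {4, 5} \<and> degree E q = 5 \<and> degree E r = 5)"
    if "(p, q, r) \<in> orderings x y z" for p q r
  proof -
    have "{p, q, r} \<in> E" "distinct [p, q, r]"
      using that e xyz unfolding orderings_def by (auto simp: insert_commute)
    then show ?thesis
      using no_edge_with_degrees_6_4_2[of p q r] no_light[of p q r] unfolding light_edge_def by blast
  qed
  have "2 / 3 \<le> weight (degree E x) + weight (degree E y) + weight (degree E z)"
    using degree_pos[OF e] xyz(1) excluded by (intro weight_sum_ge[where d = "degree E"]) auto
  then show ?thesis using xyz by simp
qed

lemma edge_bound_without_light_edge:
  assumes no_light: "\<And>a b c. \<not> light_edge E a b c"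
  shows "2 * card E + 3 * card {v \<in> V. 6 \<le> degree E v} \<le> 3 * card V"
proof -
  have "2 / 3 * real (card E) = (\<Sum>e\<in>E. 2 / 3)" by simp
  also have "\<dots> \<le> (\<Sum>e\<in>E. \<Sum>v\<in>e. weight (degree E v))"
    using edge_weight_ge[OF no_light] by (rule sum_mono)
  also have "\<dots> = (\<Sum>v\<in>V. real (degree E v) * weight (degree E v))"
    by (rule sum_edge_weights)
  also have "\<dots> \<le> (\<Sum>v\<in>V. if degree E v < 6 then 1 else 0)"
    by (intro sum_mono) (simp add: weight_def)
  also have "\<dots> = real (card {v \<in> V. degree E v < 6})"
    using finite_vertices by (simp add: sum.If_cases Int_def)
  finally have "2 * card E \<le> 3 * card {v \<in> V. degree E v < 6}" by linarith
  moreover have "card {v \<in> V. degree E v < 6} + card {v \<in> V. 6 \<le> degree E v} = card V"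
    using finite_vertices by (subst card_Un_disjoint[symmetric]) (auto intro: arg_cong[where f = card])
  ultimately show ?thesis by linarith
qed

end

locale light_edge_component = crown_free_triple_system +
  fixes a b c
  assumes light: "light_edge E a b c"
begin

lemma edge_abc: "{a, b, c} \<in> E"
  and distinct_abc: "a \<noteq> b" "a \<noteq> c" "b \<noteq> c"
  and degree_a: "degree E a \<in> {4, 5}"
  and degree_b: "degree E b = 5"
  and degree_c: "degree E c = 5"
  using light unfolding light_edge_def by auto

lemma edge_abc_permuted: "{a, c, b} \<in> E" "{b, c, a} \<in> E" "{c, a, b} \<in> E" "{c, b, a} \<in> E"
  using edge_abc by (simp_all add: insert_commute)

definition link :: "'a \<Rightarrow> 'a set" where
  "link z = {u. (\<exists>v. {z, u, v} \<in> E) \<and> u \<notin> {a, b, c}}"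

abbreviation "pa \<equiv> third E a"
abbreviation "pb \<equiv> third E b"
abbreviation "pc \<equiv> third E c"

definition orbit :: "'a \<Rightarrow> 'a set" where
  "orbit u = {u, pb u, pc u, pc (pb u)}"

lemma link_outside: "u \<in> link z \<Longrightarrow> u \<noteq> a \<and> u \<noteq> b \<and> u \<noteq> c"
  unfolding link_def by blast

lemma link_partner:
  assumes z: "z \<in> {a, b, c}" and u: "u \<in> link z"
  shows "{z, u, third E z u} \<in> E" "third E z u \<in> link z"
    "third E z (third E z u) = u" "third E z u \<noteq> u"
proof -
  obtain v where v: "{z, u, v} \<in> E" "u \<notin> {a, b, c}" using u unfolding link_def by blast
  then have "{z, u, v} \<noteq> {a, b, c}" by blast
  then have out: "v \<notin> {a, b, c}" "u \<noteq> v" using other_edge_outside[OF edge_abc v(1) z] by auto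
  have v': "{z, v, u} \<in> E" using v(1) by (simp add: insert_commute)
  show "{z, u, third E z u} \<in> E" "third E z u \<noteq> u" using v third_eqI[OF v(1)] out by auto
  show "third E z u \<in> link z" "third E z (third E z u) = u"
    using v' out third_eqI[OF v(1)] third_eqI[OF v'] unfolding link_def by auto
qed

lemma card_link_abc: "z \<in> {a, b, c} \<Longrightarrow> card (link z) = 2 * (degree E z - 1)"
  using card_link[OF edge_abc] unfolding link_def by blast

lemma link_b_subset_link_c: "link b \<subseteq> link c"
proof
  fix u assume "u \<in> link b"
  then obtain v where "{b, u, v} \<in> E" "u \<notin> {a, b, c}" unfolding link_def by blast
  then have "\<exists>y. {c, u, y} \<in> E"
    using neighbour_transfer[OF edge_abc] degree_a degree_c by auto
  with \<open>u \<notin> {a, b, c}\<close> show "u \<in> link c" unfolding link_def by blast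
qed

lemma link_c_subset_link_b: "link c \<subseteq> link b"
proof
  fix u assume "u \<in> link c"
  then obtain v where "{c, u, v} \<in> E" "u \<notin> {a, c, b}" unfolding link_def by blast
  then have "\<exists>y. {b, u, y} \<in> E"
    using neighbour_transfer[OF edge_abc_permuted(1)] degree_a degree_b by auto
  with \<open>u \<notin> {a, c, b}\<close> show "u \<in> link b" unfolding link_def by blast
qed

lemma link_c_eq: "link c = link b"
  using link_b_subset_link_c link_c_subset_link_b by blast

lemma link_a_subset: "link a \<subseteq> link b"
proof
  fix u assume "u \<in> link a"
  then obtain v where "{a, u, v} \<in> E" "u \<notin> {c, a, b}" unfolding link_def by blast
  then have "\<exists>y. {b, u, y} \<in> E"
    using neighbour_transfer[OF edge_abc_permuted(3)] degree_b degree_c by auto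
  with \<open>u \<notin> {c, a, b}\<close> show "u \<in> link b" unfolding link_def by blast
qed

lemma card_link_b: "card (link b) = 8"
  using card_link_abc[of b] degree_b by simp

lemma card_link_a: "6 \<le> card (link a)"
  using card_link_abc[of a] degree_a by auto

lemma edge_pa: "u \<in> link a \<Longrightarrow> {a, u, pa u} \<in> E"
  and edge_pb: "u \<in> link b \<Longrightarrow> {b, u, pb u} \<in> E"
  and edge_pc: "u \<in> link b \<Longrightarrow> {c, u, pc u} \<in> E"
  using link_partner(1)[of a u] link_partner(1)[of b u] link_partner(1)[of c u] link_c_eq by auto

lemma partner_in_link [simp]:
  "u \<in> link a \<Longrightarrow> pa u \<in> link a"
  "u \<in> link b \<Longrightarrow> pb u \<in> link b"
  "u \<in> link b \<Longrightarrow> pc u \<in> link b"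
  using link_partner(2)[of a u] link_partner(2)[of b u] link_partner(2)[of c u] link_c_eq by auto

lemma partner_involution [simp]:
  "u \<in> link a \<Longrightarrow> pa (pa u) = u"
  "u \<in> link b \<Longrightarrow> pb (pb u) = u"
  "u \<in> link b \<Longrightarrow> pc (pc u) = u"
  using link_partner(3)[of a u] link_partner(3)[of b u] link_partner(3)[of c u] link_c_eq by auto

lemma partner_neq:
  "u \<in> link a \<Longrightarrow> pa u \<noteq> u"
  "u \<in> link b \<Longrightarrow> pb u \<noteq> u"
  "u \<in> link b \<Longrightarrow> pc u \<noteq> u"
  using link_partner(4)[of a u] link_partner(4)[of b u] link_partner(4)[of c u] link_c_eq by auto

lemma pb_neq_pc: "u \<in> link b \<Longrightarrow> pb u \<noteq> pc u"
proof
  assume u: "u \<in> link b" and eq: "pb u = pc u"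
  then have "{b, u, pb u} = {c, u, pc u}"
    using edge_eqI[OF edge_pb[OF u] edge_pc[OF u], of u "pb u"] partner_neq(2)[OF u] by simp
  then have "c \<in> {b, u, pb u}" by blast
  then show False using u distinct_abc link_outside partner_in_link(2) by blast
qed

lemma pc_pb_eq_pa: "u \<in> link a \<Longrightarrow> pc (pb u) = pa u"
  using partner_cycle_closes[OF edge_abc _ edge_pa edge_pb edge_pc] degree_b link_a_subset link_outside
  by auto

lemma pb_pc_eq_pa: "u \<in> link a \<Longrightarrow> pb (pc u) = pa u"
  using partner_cycle_closes[OF edge_abc_permuted(1) _ edge_pa edge_pc edge_pb] degree_c link_a_subset
    link_outside by auto

lemma pa_pb_eq_pc: "u \<in> link b \<Longrightarrow> pb u \<in> link a \<Longrightarrow> pa (pb u) = pc u"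
  using partner_cycle_closes[OF edge_abc_permuted(4) _ edge_pc edge_pb edge_pa] degree_b link_outside
  by auto

lemma pa_pc_eq_pb: "u \<in> link b \<Longrightarrow> pc u \<in> link a \<Longrightarrow> pa (pc u) = pb u"
  using partner_cycle_closes[OF edge_abc_permuted(2) _ edge_pb edge_pc edge_pa] degree_c link_outside
  by auto

text \<open>link a occupies at least 6 of the 8 vertices of link b.\<close>
lemma link_a_meets_triple: "u \<in> link b \<Longrightarrow> u \<in> link a \<or> pb u \<in> link a \<or> pc u \<in> link a"
proof (rule ccontr)
  assume u: "u \<in> link b" and "\<not> (u \<in> link a \<or> pb u \<in> link a \<or> pc u \<in> link a)"
  then have "link a \<subseteq> link b - {u, pb u, pc u}" using link_a_subset by blast
  moreover have "card (link b - {u, pb u, pc u}) = 5"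
    using u card_link_b partner_neq(2,3)[OF u] pb_neq_pc[OF u]
    by (subst card_Diff_subset) (auto simp: card_insert_if)
  ultimately have "card (link a) \<le> 5"
    using card_link_b by (metis card_mono card.infinite finite_Diff zero_neq_numeral)
  then show False using card_link_a by simp
qed

lemma link_a_outside: "u \<in> link b \<Longrightarrow> u \<notin> link a \<Longrightarrow> pb u \<in> link a \<and> pc u \<in> link a"
  using link_a_meets_triple pa_pb_eq_pc pa_pc_eq_pb partner_in_link(1) by metis

text \<open>So pb and pc generate a Klein four-group acting on link b; its orbits are the sets orbit u.\<close>
lemma pb_pc_commute [simp]:
  assumes u: "u \<in> link b"
  shows "pb (pc u) = pc (pb u)"
proof (cases "u \<in> link a")
  case True
  then show ?thesis using pc_pb_eq_pa pb_pc_eq_pa by simp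
next
  case False
  then have "pb u \<in> link a" using link_a_outside u by blast
  then have "pb (pc (pb u)) = pc u" using pb_pc_eq_pa pa_pb_eq_pc u by simp
  then have "pb (pb (pc (pb u))) = pb (pc u)" by simp
  then show ?thesis using u by simp
qed

lemma orbit_distinct:
  assumes u: "u \<in> link b"
  shows "distinct [u, pb u, pc u, pc (pb u)]"
proof -
  have "pc (pb u) \<noteq> u" "pc (pb u) \<noteq> pc u"
    using u pb_neq_pc[OF u] partner_neq(2)[OF u] by (metis partner_in_link(2) partner_involution(3))+
  moreover have "pc (pb u) \<noteq> pb u" using partner_neq(3) u by simp
  ultimately show ?thesis
    using partner_neq(2,3)[OF u, THEN not_sym] pb_neq_pc[OF u] by auto
qed

lemma finite_orbit: "finite (orbit u)"
  unfolding orbit_def by simp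

lemma orbit_subset: "u \<in> link b \<Longrightarrow> orbit u \<subseteq> link b"
  unfolding orbit_def by simp

lemma card_orbit: "u \<in> link b \<Longrightarrow> card (orbit u) = 4"
  using orbit_distinct[of u] unfolding orbit_def by auto

lemma orbit_eq:
  assumes u: "u \<in> link b" and w: "w \<in> orbit u"
  shows "orbit w = orbit u"
  using w u unfolding orbit_def by (elim insertE) (auto simp: insert_commute)

lemma link_b_two_orbits:
  assumes u: "u \<in> link b" and s: "s \<in> link b" "s \<notin> orbit u"
  shows "link b = orbit u \<union> orbit s"
proof -
  have "orbit u \<inter> orbit s = {}"
  proof (rule ccontr)
    assume "orbit u \<inter> orbit s \<noteq> {}"
    then obtain w where "w \<in> orbit u" "w \<in> orbit s" by blast
    then have "orbit u = orbit s" using orbit_eq u s(1) by metis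
    moreover have "s \<in> orbit s" unfolding orbit_def by simp
    ultimately show False using s(2) by simp
  qed
  then have "card (orbit u \<union> orbit s) = card (link b)"
    using card_orbit u s(1) card_link_b finite_orbit by (simp add: card_Un_disjoint)
  moreover have "finite (link b)" using card_link_b by (intro card_ge_0_finite) simp
  ultimately show ?thesis using orbit_subset u s(1) by (metis card_subset_eq le_sup_iff)
qed

end

context light_edge_component
begin

lemma edge_off_bc_avoids_partners:
  assumes f: "f \<in> E" "b \<notin> f" "c \<notin> f" and u: "u \<in> link b" "u \<in> f" and w: "w \<in> f"
  shows "w \<noteq> pb u" "w \<noteq> pc u"
proof -
  show "w \<noteq> pb u"
  proof
    assume "w = pb u"
    then have "f = {b, u, pb u}"
      using edge_eqI[OF f(1) edge_pb[OF u(1)], of u w] u(2) w partner_neq(2)[OF u(1)] by auto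
    then show False using f(2) by blast
  qed
  show "w \<noteq> pc u"
  proof
    assume "w = pc u"
    then have "f = {c, u, pc u}"
      using edge_eqI[OF f(1) edge_pc[OF u(1)], of u w] u(2) w partner_neq(3)[OF u(1)] by auto
    then show False using f(3) by blast
  qed
qed

lemma diagonal_edge_misses_link_a:
  assumes f: "f \<in> E" "a \<notin> f" and v: "v \<in> link b" "v \<in> f" "pc (pb v) \<in> f"
  shows "v \<notin> link a"
proof
  assume va: "v \<in> link a"
  then have "f = {a, v, pa v}"
    using edge_eqI[OF f(1) edge_pa[OF va], of v "pc (pb v)"] v(2,3) pc_pb_eq_pa[OF va]
      partner_neq(1)[OF va] by auto
  then show False using f(2) by blast
qed

lemma edge_through_b_in_link:
  assumes "{b, m, m'} \<in> E" "{b, m, m'} \<noteq> {a, b, c}"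
  shows "m \<in> link b \<and> m' \<in> link b \<and> m \<noteq> m'"
proof -
  have "m \<notin> {a, b, c} \<and> m' \<notin> {a, b, c} \<and> m \<noteq> m'"
    using other_edge_outside[OF edge_abc assms(1) _ assms(2)] by blast
  moreover have "{b, m', m} \<in> E" using assms(1) by (simp add: insert_commute)
  ultimately show ?thesis using assms(1) unfolding link_def by blast
qed

text \<open>The four edges through b other than {a, b, c} pair up the vertices of link b, so at most
  three of them are blocked by the edge {b, x, pb x} and two vertices of T.\<close>
lemma leg_at_b:
  assumes x: "x \<in> link b" and T: "finite T" "b \<notin> T" "card T \<le> 2"
  obtains m m' where "{b, m, m'} \<in> E" "m \<in> link b" "m' \<in> link b" "m \<noteq> m'"
    "m \<notin> T" "m' \<notin> T" "m \<notin> {x, pb x}" "m' \<notin> {x, pb x}"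
    "\<And>t. t \<in> T \<Longrightarrow> t \<in> link b \<Longrightarrow> pb t \<notin> {m, m'}"
proof -
  have "card {{a, b, c}, {b, x, pb x}} + card T < degree E b"
    using T(3) degree_b by (simp add: card_insert_if)
  then obtain m m' where m: "{b, m, m'} \<in> E" "{b, m, m'} \<notin> {{a, b, c}, {b, x, pb x}}"
    "m \<notin> T" "m' \<notin> T"
    using edge_avoiding[of "{{a, b, c}, {b, x, pb x}}" T b] T(1,2) by blast
  then have link: "m \<in> link b" "m' \<in> link b" "m \<noteq> m'" using edge_through_b_in_link by auto
  have same: "{b, m, m'} = e" if "e \<in> E" "b \<in> e" "y \<in> e" "y \<in> {m, m'}" for e y
  proof -
    have "y \<noteq> b" using that(4) link link_outside by blast
    then show ?thesis using edge_eqI[OF m(1) that(1), of b y] that by blast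
  qed
  have "m \<notin> {x, pb x}" "m' \<notin> {x, pb x}"
    using same[OF edge_pb[OF x]] m(2) by blast+
  moreover have "pb t \<notin> {m, m'}" if "t \<in> T" "t \<in> link b" for t
  proof
    assume "pb t \<in> {m, m'}"
    then have "t \<in> {b, m, m'}" using same[OF edge_pb[OF that(2)]] by blast
    then show False using that m(3,4) link_outside[OF that(2)] by blast
  qed
  ultimately show ?thesis using that m(1,3,4) link by blast
qed

text \<open>A crown with body {b, pc (pb v), pc v}: the leg at pc v goes through a, since
  pc v lies in link a.\<close>
lemma no_edge_on_diagonal_off_link_a:
  assumes v: "v \<in> link b" "v \<notin> link a" and f: "{v, pc (pb v), r} \<in> E" and r: "r \<notin> {a, b, c}"
  shows False
proof -
  let ?w = "pc (pb v)"
  have w: "?w \<in> link b" "pb ?w = pc v" using v(1) by simp_all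
  have leg_a: "{pc v, a, pb v} \<in> E"
    using edge_pa[of "pc v"] pa_pc_eq_pb[OF v(1)] link_a_outside[OF v] by (simp add: insert_commute)
  have leg_w: "{?w, v, r} \<in> E" using f by (simp add: insert_commute)
  have off: "b \<notin> {v, ?w, r}" "c \<notin> {v, ?w, r}"
    using r link_outside[OF v(1)] link_outside[OF w(1)] by auto
  have r_partners: "r \<noteq> pb v" "r \<noteq> pc v"
    using edge_off_bc_avoids_partners[OF f off, of v r] v(1) by auto
  obtain m m' where m: "{b, m, m'} \<in> E" "m \<in> link b" "m' \<in> link b" "m \<noteq> m'"
    "m \<notin> {v, r}" "m' \<notin> {v, r}" "m \<notin> {?w, pb ?w}" "m' \<notin> {?w, pb ?w}"
    "\<And>t. t \<in> {v, r} \<Longrightarrow> t \<in> link b \<Longrightarrow> pb t \<notin> {m, m'}"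
    by (rule leg_at_b[OF w(1), of "{v, r}"])
      (use r link_outside[OF v(1)] in \<open>auto simp: card_insert_if\<close>)
  note m_partner = m(9)[of v, simplified, OF v(1)]
  have "distinct [b, ?w, pc v, m, m', v, r, a, pb v]"
    using orbit_distinct[OF v(1)] edge_distinct[OF f] r r_partners m(1-8) m_partner w(2) distinct_abc
      link_outside[OF v(1)] link_outside[OF m(2)] link_outside[OF m(3)] link_outside[OF w(1)]
      link_outside[OF partner_in_link(2)[OF v(1)]] link_outside[OF partner_in_link(3)[OF v(1)]]
    by auto
  then show False using no_crown edge_pb[OF w(1)] m(1) leg_w leg_a w(2) by metis
qed

text \<open>A crown with body {b, u, pb u}, whose leg at pb u passes through c.\<close>
lemma no_edge_leaving_link:
  assumes u: "u \<in> link b" and f: "{u, s, t} \<in> E" and s: "s \<notin> link b" "s \<notin> {a, b, c}"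
    and t: "t \<noteq> pc (pb u)" "t \<notin> {a, b, c}"
  shows False
proof -
  have diag: "pc (pb u) \<in> link b" using u by simp
  have leg_pb: "{pb u, c, pc (pb u)} \<in> E" using edge_pc[of "pb u"] u by (simp add: insert_commute)
  have off: "b \<notin> {u, s, t}" "c \<notin> {u, s, t}" using s t link_outside[OF u] by auto
  have t_partner: "t \<noteq> pb u" using edge_off_bc_avoids_partners[OF f off, of u t] u by auto
  obtain m m' where m: "{b, m, m'} \<in> E" "m \<in> link b" "m' \<in> link b" "m \<noteq> m'"
    "m \<notin> {t, pc (pb u)}" "m' \<notin> {t, pc (pb u)}" "m \<notin> {u, pb u}" "m' \<notin> {u, pb u}"
    by (rule leg_at_b[OF u, of "{t, pc (pb u)}"])
      (use t u link_outside[OF diag] in \<open>auto simp: card_insert_if\<close>)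
  have "distinct [b, u, pb u, m, m', s, t, c, pc (pb u)]"
    using orbit_distinct[OF u] edge_distinct[OF f] s t t_partner m distinct_abc partner_in_link(2)[OF u]
      link_outside[OF u] link_outside[OF m(2)] link_outside[OF m(3)]
      link_outside[OF partner_in_link(2)[OF u]] link_outside[OF diag]
    by auto
  then show False using no_crown edge_pb[OF u] m(1) f leg_pb by blast
qed

lemma edge_inside_link:
  assumes u: "u \<in> link b" and s: "s \<in> link b" and t: "t \<in> link b" and f: "{u, s, t} \<in> E"
    and diag: "s \<noteq> pc (pb u)" "t \<noteq> pc (pb u)"
  shows "t = pc (pb s)"
proof -
  have off: "b \<notin> {u, s, t}" "c \<notin> {u, s, t}" using link_outside u s t by auto
  have "s \<notin> orbit u" "t \<notin> orbit u"
    using edge_distinct[OF f] edge_off_bc_avoids_partners[OF f off u] diag unfolding orbit_def by auto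
  then have "t \<in> orbit s" using link_b_two_orbits[OF u s] t by blast
  then show ?thesis
    using edge_distinct[OF f] edge_off_bc_avoids_partners[OF f off s] unfolding orbit_def by auto
qed

lemma edge_through_link_meets_abc:
  assumes u: "u \<in> link b" and f: "f \<in> E" "u \<in> f"
  shows "a \<in> f \<or> b \<in> f \<or> c \<in> f"
proof (rule ccontr)
  assume off: "\<not> (a \<in> f \<or> b \<in> f \<or> c \<in> f)"
  obtain s t where st: "f = {u, s, t}" using edge_through[OF f] by metis
  then have out: "s \<notin> {a, b, c}" "t \<notin> {a, b, c}" using off by auto
  have fE: "{u, s, t} \<in> E" "{u, t, s} \<in> E" using f(1) st by (simp_all add: insert_commute)
  have diag_off_link_a: "v \<notin> link a" if "v \<in> link b" "v \<in> f" "pc (pb v) \<in> f" for v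
    using diagonal_edge_misses_link_a[OF f(1) _ that] off by blast
  show False
  proof (cases "t = pc (pb u) \<or> s = pc (pb u)")
    case True
    then have "{u, pc (pb u), s} \<in> E \<and> s \<notin> {a, b, c} \<or> {u, pc (pb u), t} \<in> E \<and> t \<notin> {a, b, c}"
      using fE out by (auto simp: insert_commute)
    moreover have "u \<notin> link a" using diag_off_link_a[OF u f(2)] True st by blast
    ultimately show False using no_edge_on_diagonal_off_link_a[OF u] by blast
  next
    case False
    show False
    proof (cases "s \<in> link b \<and> t \<in> link b")
      case True
      then have "t = pc (pb s)" using edge_inside_link[OF u _ _ fE(1)] False by blast
      moreover have "{s, pc (pb s), u} \<in> E" using fE calculation by (simp add: insert_commute)
      ultimately show False
        using no_edge_on_diagonal_off_link_a[of s u] diag_off_link_a[of s] True st link_outside[OF u]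
        by blast
    next
      case False
      then show False using no_edge_leaving_link[OF u fE(1)] no_edge_leaving_link[OF u fE(2)]
          \<open>\<not> (t = pc (pb u) \<or> s = pc (pb u))\<close> out by blast
    qed
  qed
qed

definition component :: "'a set" where
  "component = {a, b, c} \<union> link b"

lemma edge_meeting_component_meets_abc:
  "f \<in> E \<Longrightarrow> f \<inter> component \<noteq> {} \<Longrightarrow> a \<in> f \<or> b \<in> f \<or> c \<in> f"
  unfolding component_def using edge_through_link_meets_abc by blast

lemma edge_through_abc_in_component:
  assumes f: "f \<in> E" "z \<in> f" and z: "z \<in> {a, b, c}"
  shows "f \<subseteq> component"
proof (cases "f = {a, b, c}")
  case False
  obtain x y where xy: "f = {z, x, y}" using edge_through[OF f] by metis
  then have "{z, x, y} \<in> E" "{z, y, x} \<in> E" "{z, x, y} \<noteq> {a, b, c}"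
    using f False by (simp_all add: insert_commute)
  then have "x \<in> link z" "y \<in> link z"
    using other_edge_outside[OF edge_abc _ z] unfolding link_def by blast+
  then have "x \<in> link b" "y \<in> link b" using z link_c_eq link_a_subset by auto
  then show ?thesis using xy z unfolding component_def by auto
qed (auto simp: component_def)

lemma component_closed: "f \<in> E \<Longrightarrow> f \<inter> component \<noteq> {} \<Longrightarrow> f \<subseteq> component"
  using edge_meeting_component_meets_abc edge_through_abc_in_component by blast

lemma component_subset: "component \<subseteq> V"
  unfolding component_def using edge_subset edge_abc edge_pb by blast

lemma card_component: "card component = 11"
proof -
  have "{a, b, c} \<inter> link b = {}" using link_outside by blast
  moreover have "finite (link b)" using card_link_b by (intro card_ge_0_finite) simp
  ultimately show ?thesis
    unfolding component_def using card_link_b distinct_abc by (simp add: card_Un_disjoint)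
qed

lemma card_component_edges: "card {f \<in> E. f \<subseteq> component} \<le> 15"
proof -
  have "{f \<in> E. f \<subseteq> component} \<subseteq> (\<Union>z\<in>{a, b, c}. {f \<in> E. z \<in> f})"
  proof
    fix f assume f: "f \<in> {f \<in> E. f \<subseteq> component}"
    then have "f \<noteq> {}" using card_edge[of f] by auto
    then have "a \<in> f \<or> b \<in> f \<or> c \<in> f" using edge_meeting_component_meets_abc f by blast
    then show "f \<in> (\<Union>z\<in>{a, b, c}. {f \<in> E. z \<in> f})" using f by blast
  qed
  then have "card {f \<in> E. f \<subseteq> component} \<le> card (\<Union>z\<in>{a, b, c}. {f \<in> E. z \<in> f})"
    using finite_edges by (intro card_mono) auto
  also have "\<dots> \<le> (\<Sum>z\<in>{a, b, c}. degree E z)"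
    unfolding degree_def by (rule card_UN_le) simp
  also have "\<dots> \<le> 15"
    using distinct_abc degree_a degree_b degree_c by auto
  finally show ?thesis .
qed

lemma degree_component: "v \<in> component \<Longrightarrow> degree E v \<le> 5"
proof (cases "v \<in> link b")
  case True
  have "{f \<in> E. v \<in> f} \<subseteq> (\<Union>z\<in>{a, b, c}. {f \<in> E. v \<in> f \<and> z \<in> f})"
  proof
    fix f assume "f \<in> {f \<in> E. v \<in> f}"
    then show "f \<in> (\<Union>z\<in>{a, b, c}. {f \<in> E. v \<in> f \<and> z \<in> f})"
      using edge_through_link_meets_abc[OF True] by blast
  qed
  then have "degree E v \<le> card (\<Union>z\<in>{a, b, c}. {f \<in> E. v \<in> f \<and> z \<in> f})"
    unfolding degree_def using finite_edges by (intro card_mono) auto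
  also have "\<dots> \<le> (\<Sum>z\<in>{a, b, c}. card {f \<in> E. v \<in> f \<and> z \<in> f})"
    by (rule card_UN_le) simp
  also have "\<dots> \<le> (\<Sum>z\<in>{a, b, c}. 1)"
    using link_outside[OF True] card_edges_through_two by (intro sum_mono) auto
  also have "\<dots> \<le> 5" by (simp add: card_insert_if)
  finally show ?thesis .
qed (use degree_a degree_b degree_c in \<open>auto simp: component_def\<close>)

end

lemma crown_free_subset: "crown_free V E \<Longrightarrow> E' \<subseteq> E \<Longrightarrow> crown_free V' E'"
  unfolding crown_free_def has_crown_def by blast

context triple_system
begin

lemma triple_system_delete: "triple_system (V - U) {f \<in> E. f \<inter> U = {}}"
  using linear edge_subset unfolding triple_system_def linear_3graph_def by blast

lemma edge_bound_from_closed_part: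
  assumes U: "U \<subseteq> V" and closed: "\<And>f. f \<in> E \<Longrightarrow> f \<inter> U \<noteq> {} \<Longrightarrow> f \<subseteq> U"
    and low: "\<And>v. v \<in> U \<Longrightarrow> degree E v < 6"
    and few: "2 * card {f \<in> E. f \<subseteq> U} \<le> 3 * card U"
    and rest: "2 * card {f \<in> E. f \<inter> U = {}} + 3 * card {v \<in> V - U. 6 \<le> degree {f \<in> E. f \<inter> U = {}} v}
      \<le> 3 * card (V - U)"
  shows "2 * card E + 3 * card {v \<in> V. 6 \<le> degree E v} \<le> 3 * card V"
proof -
  let ?E' = "{f \<in> E. f \<inter> U = {}}"
  have "E = {f \<in> E. f \<subseteq> U} \<union> ?E'" using closed by blast
  moreover have "f \<noteq> {}" if "f \<in> E" for f using card_edge[OF that] by auto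
  then have "{f \<in> E. f \<subseteq> U} \<inter> ?E' = {}" by blast
  ultimately have "card E = card {f \<in> E. f \<subseteq> U} + card ?E'"
    using finite_edges by (metis (no_types, lifting) card_Un_disjoint finite_Un)
  moreover have "{v \<in> V. 6 \<le> degree E v} = {v \<in> V - U. 6 \<le> degree ?E' v}"
  proof -
    have "degree ?E' v = degree E v" if "v \<notin> U" for v
    proof -
      have "{f \<in> ?E'. v \<in> f} = {f \<in> E. v \<in> f}" using that closed by blast
      then show ?thesis unfolding degree_def by simp
    qed
    moreover have "v \<notin> U" if "6 \<le> degree E v" for v using low[of v] that by linarith
    ultimately show ?thesis by auto
  qed
  moreover have "card V = card U + card (V - U)"
    using card_Diff_subset[OF finite_subset[OF U finite_vertices] U] card_mono[OF finite_vertices U]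
    by simp
  ultimately show ?thesis using few rest by simp
qed

end

context light_edge_component
begin

lemma card_remainder_less: "card {f \<in> E. f \<inter> component = {}} < card E"
proof -
  have "a \<in> component" unfolding component_def by simp
  then have "{a, b, c} \<notin> {f \<in> E. f \<inter> component = {}}" by auto
  then have "{f \<in> E. f \<inter> component = {}} \<noteq> E" using edge_abc by metis
  moreover have "{f \<in> E. f \<inter> component = {}} \<subseteq> E" by blast
  ultimately have "{f \<in> E. f \<inter> component = {}} \<subset> E" by (intro psubsetI)
  then show ?thesis by (rule psubset_card_mono[OF finite_edges])
qed

lemma edge_bound_from_remainder:
  assumes "2 * card {f \<in> E. f \<inter> component = {}}
      + 3 * card {v \<in> V - component. 6 \<le> degree {f \<in> E. f \<inter> component = {}} v}
      \<le> 3 * card (V - component)"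
  shows "2 * card E + 3 * card {v \<in> V. 6 \<le> degree E v} \<le> 3 * card V"
proof (rule edge_bound_from_closed_part[OF component_subset _ _ _ assms])
  show "f \<subseteq> component" if "f \<in> E" "f \<inter> component \<noteq> {}" for f
    using component_closed that .
  show "degree E v < 6" if "v \<in> component" for v using degree_component[OF that] by simp
  show "2 * card {f \<in> E. f \<subseteq> component} \<le> 3 * card component"
    using card_component_edges card_component by simp
qed

end

lemma crown_free_edge_bound:
  assumes "linear_3graph V E" "crown_free V E"
  shows "2 * card E + 3 * card {v \<in> V. 6 \<le> degree E v} \<le> 3 * card V"
  using assms
proof (induction "card E" arbitrary: V E rule: less_induct)
  case less
  interpret crown_free_triple_system V E
    by (intro crown_free_triple_system.intro triple_system.intro crown_free_triple_system_axioms.intro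
        less.prems)
  show ?case
  proof (cases "\<exists>a b c. light_edge E a b c")
    case False
    then show ?thesis using edge_bound_without_light_edge by blast
  next
    case True
    then obtain a b c where "light_edge E a b c" by blast
    then interpret light_edge_component V E a b c
      by (intro light_edge_component.intro light_edge_component_axioms.intro) unfold_locales
    let ?E' = "{f \<in> E. f \<inter> component = {}}"
    have "linear_3graph (V - component) ?E'"
      using triple_system_delete unfolding triple_system_def .
    moreover have "crown_free (V - component) ?E'"
      by (rule crown_free_subset[OF crown_free]) blast
    ultimately have "2 * card ?E' + 3 * card {v \<in> V - component. 6 \<le> degree ?E' v}
        \<le> 3 * card (V - component)"
      by (rule less.hyps[OF card_remainder_less])
    then show ?thesis by (rule edge_bound_from_remainder)
  qed
qed

theorem theorem1p1:
  fixes V :: "'a set" and E :: "'a set set"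
  assumes "linear_3graph V E"
    and "crown_free V E"
  shows "real (card E) \<le> 3 * (real (card V) - real (card {v \<in> V. degree E v \<ge> 6})) / 2"
proof -
  have "real (2 * card E + 3 * card {v \<in> V. 6 \<le> degree E v}) \<le> real (3 * card V)"
    using crown_free_edge_bound[OF assms] by (rule of_nat_mono)
  then show ?thesis by simp
qed

end
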